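(* Let $\phi:B_E\to B_E$ be analytic. For each $z\in B_E$ with $\phi(z)\neq 0$ there is $\eta(z) \in E$ with $\|\eta(z)\|=1$ and $\langle \phi(z),\eta(z)\rangle=0$ such that, for $\xi =\phi(z) + \sqrt{1 - \|\phi(z)\|^2}\,\eta(z)$, $$|\langle\mathcal R\phi(z),\xi\rangle|\ge\sqrt{1 - \|\phi(z)\|^2}\, \|\mathcal R\phi(z)\| -\Big(1 + \frac{\sqrt{1 - \|\phi(z)\|^2}}{\|\phi(z)\|}\Big) |\langle \mathcal R\phi(z),\phi(z)\rangle|.$$
   Context: $E$ is a complex Hilbert space of arbitrary dimension with inner product $\langle\cdot,\cdot\rangle$ and open unit ball $B_E$; $\mathcal R\phi(z)=\phi'(z)(z)$ is the radial derivative of $\phi$.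
   Formalization: E has complex dimension at least 2, that is, it contains two complex-linearly independent vectors. Apart from conventions, each condition added here is assumed in the paper as well or is needed for the statement above to hold. *)

theory Defs
  imports "HOL-Analysis.Analysis"
begin

class complex_inner = real_normed_vector +
  fixes cscale :: "complex \<Rightarrow> 'a \<Rightarrow> 'a"
    and cinner :: "'a \<Rightarrow> 'a \<Rightarrow> complex"
  assumes cscale_add_right: "cscale a (x + y) = cscale a x + cscale a y"
    and cscale_add_left: "cscale (a + b) x = cscale a x + cscale b x"
    and cscale_cscale: "cscale a (cscale b x) = cscale (a * b) x"
    and cscale_of_real: "cscale (complex_of_real r) x = r *\<^sub>R x"
    and cinner_add_left: "cinner (x + y) z = cinner x z + cinner y z"
    and cinner_cscale_left: "cinner (cscale a x) y = a * cinner x y"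
    and cinner_commute: "cinner y x = cnj (cinner x y)"
    and cinner_self_norm: "cinner x x = complex_of_real ((norm x)\<^sup>2)"

class complex_hilbert = complex_inner + complete_space

definition cholomorphic_on :: "('a::complex_inner \<Rightarrow> 'b::complex_inner) \<Rightarrow> 'a set \<Rightarrow> bool" where
  "cholomorphic_on f U \<longleftrightarrow>
     (\<forall>z\<in>U. \<exists>L. (f has_derivative L) (at z) \<and> (\<forall>a x. L (cscale a x) = cscale a (L x)))"

definition radial_deriv :: "('a::complex_inner \<Rightarrow> 'b::complex_inner) \<Rightarrow> 'a \<Rightarrow> 'b" where
  "radial_deriv f z = frechet_derivative f (at z) z"

definition cdim_ge_2 :: "'a::complex_inner itself \<Rightarrow> bool" where
  "cdim_ge_2 _ \<longleftrightarrow> (\<exists>u v::'a. \<forall>a b. cscale a u + cscale b v = 0 \<longrightarrow> a = 0 \<and> b = 0)"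

end

theory Submission
  imports Defs
begin

text \<open>Write \<open>R = \<R>\<phi>(z)\<close> and \<open>p = \<phi>(z)\<close>, and split \<open>R = v + c p\<close> with \<open>v \<bottom> p\<close>.
  Choose \<open>\<eta>\<close> a unit vector orthogonal to \<open>p\<close> with \<open>\<langle>v, \<eta>\<rangle> = \<parallel>v\<parallel>\<close>: the normalised \<open>v\<close>,
  or any unit vector orthogonal to \<open>p\<close> if \<open>v = 0\<close> (this is where complex dimension
  at least two is used). Then \<open>\<langle>R, p + s\<eta>\<rangle> = \<langle>R, p\<rangle> + s\<parallel>v\<parallel>\<close>, and the triangle
  inequality gives \<open>\<parallel>v\<parallel> \<ge> \<parallel>R\<parallel> - |\<langle>R, p\<rangle>| / \<parallel>p\<parallel>\<close>. Only \<open>\<parallel>\<phi>(z)\<parallel> \<le> 1\<close> (so that \<open>s \<ge> 0\<close>)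
  is needed.\<close>

lemma cscale_zero_left: "cscale 0 (x::'a::complex_inner) = 0"
  using cscale_of_real[of 0 x] by simp

lemma cscale_one: "cscale 1 (x::'a::complex_inner) = x"
  using cscale_of_real[of 1 x] by simp

lemma cscale_minus_left: "cscale (- a) (x::'a::complex_inner) = - cscale a x"
  using cscale_add_left[of a "-a" x] cscale_zero_left[of x]
  by (simp add: add_eq_0_iff2)

lemma cinner_zero_left: "cinner (0::'a::complex_inner) y = 0"
  using cinner_add_left[of "0::'a" 0 y] by simp

lemma cinner_minus_left: "cinner (- x::'a::complex_inner) y = - cinner x y"
  using cinner_add_left[of x "-x" y] cinner_zero_left[of y]
  by (simp add: add_eq_0_iff2)

lemma cinner_diff_left: "cinner (x - z::'a::complex_inner) y = cinner x y - cinner z y"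
  using cinner_add_left[of x "-z" y] cinner_minus_left[of z y] by simp

lemma cinner_cscale_right: "cinner (x::'a::complex_inner) (cscale a y) = cnj a * cinner x y"
  by (metis cinner_commute cinner_cscale_left complex_cnj_cnj complex_cnj_mult)

lemma cinner_scaleR_right:
  "cinner (x::'a::complex_inner) (r *\<^sub>R y) = complex_of_real r * cinner x y"
  using cinner_cscale_right[of x "complex_of_real r" y] cscale_of_real[of r y] by simp

lemma cinner_add_right: "cinner (x::'a::complex_inner) (y + z) = cinner x y + cinner x z"
  by (metis cinner_add_left cinner_commute complex_cnj_add)

lemma norm_cscale: "norm (cscale a (x::'a::complex_inner)) = cmod a * norm x"
proof -
  have "complex_of_real ((norm (cscale a x))\<^sup>2) = a * cnj a * complex_of_real ((norm x)\<^sup>2)"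
    by (metis cinner_self_norm cinner_cscale_left cinner_cscale_right mult.assoc)
  also have "\<dots> = complex_of_real ((cmod a * norm x)\<^sup>2)"
    by (simp add: complex_mult_cnj power_mult_distrib cmod_power2 del: of_real_power)
  finally have "(norm (cscale a x))\<^sup>2 = (cmod a * norm x)\<^sup>2"
    using of_real_eq_iff by blast
  then show ?thesis by (simp add: power2_eq_iff_nonneg)
qed

definition perp_coeff :: "'a::complex_inner \<Rightarrow> 'a \<Rightarrow> complex" where
  "perp_coeff p x = cinner x p / complex_of_real ((norm p)\<^sup>2)"

definition perp_part :: "'a::complex_inner \<Rightarrow> 'a \<Rightarrow> 'a" where
  "perp_part p x = x - cscale (perp_coeff p x) p"

lemma perp_part_decomp: "x = perp_part p x + cscale (perp_coeff p x) p"
  by (simp add: perp_part_def)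

lemma cinner_perp_part_left:
  assumes "p \<noteq> 0" shows "cinner (perp_part p x) p = 0"
  using assms
  by (simp add: perp_part_def perp_coeff_def cinner_diff_left cinner_cscale_left cinner_self_norm)

lemma cinner_perp_part_right:
  assumes "p \<noteq> 0" shows "cinner p (perp_part p x) = 0"
  using cinner_perp_part_left[OF assms, of x] cinner_commute[of p "perp_part p x"] by simp

lemma norm_le_norm_perp_part:
  assumes "p \<noteq> 0"
  shows "norm x \<le> norm (perp_part p x) + cmod (cinner x p) / norm p"
proof -
  have "cmod (perp_coeff p x) * norm p = cmod (cinner x p) / norm p"
    using assms
    by (simp add: perp_coeff_def norm_divide norm_mult power2_eq_square del: of_real_mult)
  then show ?thesis
    using norm_triangle_ineq[of "perp_part p x" "cscale (perp_coeff p x) p"]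
    by (metis perp_part_decomp norm_cscale)
qed

lemma perp_part_nonzero_exists:
  fixes p :: "'a::complex_inner"
  assumes "cdim_ge_2 TYPE('a)"
  shows "\<exists>x. perp_part p x \<noteq> 0"
proof (rule ccontr)
  assume "\<not> ?thesis"
  then have parallel: "\<And>x. x = cscale (perp_coeff p x) p"
    by (metis perp_part_decomp add_0)
  obtain u v :: 'a where indep: "\<And>a b. cscale a u + cscale b v = 0 \<Longrightarrow> a = 0 \<and> b = 0"
    using assms unfolding cdim_ge_2_def by blast
  define a b where "a = perp_coeff p u" and "b = perp_coeff p v"
  have "cscale b u + cscale (- a) v = 0"
    by (metis a_def b_def parallel cscale_cscale cscale_minus_left mult.commute right_minus)
  then have "a = 0"
    using indep by fastforce
  then have "cscale 1 u + cscale 0 v = 0"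
    by (metis a_def b_def parallel cscale_zero_left add_0 cscale_one)
  then show False
    using indep by fastforce
qed

lemma unit_orthogonal_aligned_exists:
  fixes p x :: "'a::complex_inner"
  assumes "cdim_ge_2 TYPE('a)" and "p \<noteq> 0"
  shows "\<exists>\<eta>. norm \<eta> = 1 \<and> cinner p \<eta> = 0 \<and>
    cinner (perp_part p x) \<eta> = complex_of_real (norm (perp_part p x))"
proof -
  have normalised: "\<exists>\<eta>. norm \<eta> = 1 \<and> cinner p \<eta> = 0 \<and>
      cinner (perp_part p y) \<eta> = complex_of_real (norm (perp_part p y))"
    if "perp_part p y \<noteq> 0" for y
    using that
    by (intro exI[of _ "cscale (1 / norm (perp_part p y)) (perp_part p y)"])
      (simp add: norm_cscale cinner_cscale_right cinner_self_norm cinner_perp_part_right[OF assms(2)]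
          power2_eq_square norm_divide)
  show ?thesis
  proof (cases "perp_part p x = 0")
    case True
    obtain y where "perp_part p y \<noteq> 0"
      using perp_part_nonzero_exists[OF assms(1)] by blast
    with normalised[of y] show ?thesis
      by (auto simp: True cinner_zero_left)
  next
    case False
    with normalised show ?thesis by blast
  qed
qed

lemma cmod_cinner_shift_ge:
  fixes p w \<eta> :: "'a::complex_inner" and s :: real
  assumes "p \<noteq> 0" and "s \<ge> 0" and "cinner p \<eta> = 0"
    and aligned: "cinner (perp_part p w) \<eta> = complex_of_real (norm (perp_part p w))"
  shows "cmod (cinner w (p + s *\<^sub>R \<eta>)) \<ge> s * norm w - (1 + s / norm p) * cmod (cinner w p)"
proof -
  define n where "n = norm (perp_part p w)"
  have "cinner w \<eta> = complex_of_real n"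
    using perp_part_decomp[of w p] aligned assms(3)
    by (metis n_def cinner_add_left cinner_cscale_left mult_zero_right add_0_right)
  then have "cinner w (p + s *\<^sub>R \<eta>) = cinner w p + complex_of_real (s * n)"
    by (simp add: cinner_add_right cinner_scaleR_right)
  moreover have "s * n - cmod (cinner w p) \<le> cmod (cinner w p + complex_of_real (s * n))"
    using norm_diff_ineq[of "complex_of_real (s * n)" "cinner w p"] assms(2)
    by (simp only: n_def add.commute norm_of_real abs_of_nonneg mult_nonneg_nonneg norm_ge_zero)
  moreover have "s * norm w \<le> s * n + s * (cmod (cinner w p) / norm p)"
    using mult_left_mono[OF norm_le_norm_perp_part[OF assms(1), of w] assms(2)]
    by (simp add: n_def distrib_left)
  ultimately show ?thesis
    by (simp add: algebra_simps)
qed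

theorem lemma4p3:
  fixes \<phi> :: "'a::complex_hilbert \<Rightarrow> 'a" and z :: 'a
  assumes "cdim_ge_2 TYPE('a)"
    and "cholomorphic_on \<phi> (ball 0 1)"
    and "\<forall>w\<in>ball 0 1. \<phi> w \<in> ball 0 1"
    and "z \<in> ball 0 1"
    and "\<phi> z \<noteq> 0"
  shows "\<exists>\<eta>. norm \<eta> = 1 \<and> cinner (\<phi> z) \<eta> = 0 \<and>
           (let s = sqrt (1 - (norm (\<phi> z))\<^sup>2);
                \<xi> = \<phi> z + s *\<^sub>R \<eta>
            in cmod (cinner (radial_deriv \<phi> z) \<xi>)
               \<ge> s * norm (radial_deriv \<phi> z)
                 - (1 + s / norm (\<phi> z)) * cmod (cinner (radial_deriv \<phi> z) (\<phi> z)))"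
proof -
  obtain \<eta> where \<eta>: "norm \<eta> = 1" "cinner (\<phi> z) \<eta> = 0"
    "cinner (perp_part (\<phi> z) (radial_deriv \<phi> z)) \<eta>
       = complex_of_real (norm (perp_part (\<phi> z) (radial_deriv \<phi> z)))"
    using unit_orthogonal_aligned_exists[OF assms(1,5)] by blast
  have "norm (\<phi> z) < 1"
    using assms(3,4) by simp
  then have "sqrt (1 - (norm (\<phi> z))\<^sup>2) \<ge> 0"
    by (simp add: abs_square_le_1 less_imp_le)
  with \<eta> show ?thesis
    unfolding Let_def using cmod_cinner_shift_ge[OF assms(5)] by blast
qed

end
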